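(* Let $W$ satisfy the hypotheses in the context. For $G=(g_{ij})\in\mathbb R^{2\times2}$ with $|G|$ small, $$W_\triangle(\mathbf{Id}+G)=\tfrac12Q(G)+o(|G|^2),\qquad Q(G)=\frac{3\alpha}{16}\Big(3g_{11}^2+3g_{22}^2+2g_{11}g_{22}+4\Big(\frac{g_{12}+g_{21}}2\Big)^2\Big).$$ Moreover, $Q(G)$ depends only on the symmetric part $(G^T+G)/2$, $Q$ is positive semidefinite (hence convex) on $\mathbb R^{2\times2}$, and positive definite and strictly convex on the subspace $\mathbb R^{2\times2}_{\rm sym}$ of symmetric matrices.
   Context: $R_{\mathcal L}\in SO(2)$, $\mathbf v_1=R_{\mathcal L}\mathbf e_1$, $\mathbf v_2=R_{\mathcal L}(\tfrac12,\tfrac{\sqrt3}2)^T$. $W:[0,\infty)\to[0,\infty]$ satisfies: $W\ge0$ with $W(r)=0$ iff $r=1$; $W$ continuous on $[0,\infty)$ and $C^2$ near $1$ with $\alpha:=W''(1)>0$; $\lim_{r\to\infty}W(r)=\beta$. $W_\triangle(F)=\frac12\big(W(|F\mathbf v_1|)+W(|F\mathbf v_2|)+W(|F(\mathbf v_2-\mathbf v_1)|)\big)$ for $F\in\mathbb R^{2\times2}$. *)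

theory Defs
  imports "HOL-Analysis.Analysis" "HOL-Library.Landau_Symbols"
begin

definition lat_v1 :: "real^2^2 \<Rightarrow> real^2" where
  "lat_v1 R = R *v vector [1, 0]"

definition lat_v2 :: "real^2^2 \<Rightarrow> real^2" where
  "lat_v2 R = R *v vector [1/2, sqrt 3 / 2]"

definition W_tri :: "(real \<Rightarrow> ereal) \<Rightarrow> real^2^2 \<Rightarrow> real^2^2 \<Rightarrow> ereal" where
  "W_tri W R F = ereal (1/2) *
     (W (norm (F *v lat_v1 R)) + W (norm (F *v lat_v2 R))
      + W (norm (F *v (lat_v2 R - lat_v1 R))))"

definition Qform :: "real \<Rightarrow> real^2^2 \<Rightarrow> real" where
  "Qform \<alpha> G = 3 * \<alpha> / 16 *
     (3 * (G$1$1)^2 + 3 * (G$2$2)^2 + 2 * (G$1$1) * (G$2$2)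
      + 4 * ((G$1$2 + G$2$1) / 2)^2)"

definition strictly_convex_on :: "'a::real_vector set \<Rightarrow> ('a \<Rightarrow> real) \<Rightarrow> bool" where
  "strictly_convex_on S f \<longleftrightarrow>
     (\<forall>x\<in>S. \<forall>y\<in>S. x \<noteq> y \<longrightarrow> (\<forall>t. 0 < t \<and> t < 1 \<longrightarrow>
        f ((1 - t) *\<^sub>R x + t *\<^sub>R y) < (1 - t) * f x + t * f y))"

end

theory Submission
  imports Defs
begin

text \<open>
  Near the identity a bond along a unit vector v has length
  |(I + G) v| = 1 + v \<bullet> G v + O(|G|^2), and since W attains its minimum 0 at 1,
  W(1 + e) = \<alpha> e^2 / 2 + o(e^2). Hence each bond contributes \<alpha> (v \<bullet> G v)^2 / 2 + o(|G|^2).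
  For three unit vectors at mutual angles of 60 degrees the sum of the (v \<bullet> G v)^2 does
  not depend on the rotation and equals 2 Q(G) / \<alpha>. Finally Q is a positive multiple of a
  sum of squares of entries of (G + G^T) / 2, which gives its sign and convexity properties.
\<close>

lemma taylor_second_order_smallo:
  fixes f f' f'' :: "real \<Rightarrow> real"
  assumes "\<delta> > 0"
    and f': "\<forall>r\<in>ball x \<delta>. (f has_real_derivative f' r) (at r)"
    and f'': "\<forall>r\<in>ball x \<delta>. (f' has_real_derivative f'' r) (at r)"
    and cont: "isCont f'' x"
  shows "(\<lambda>e. f (x + e) - f x - f' x * e - f'' x / 2 * e^2) \<in> o[nhds 0](\<lambda>e. e^2)"
proof (rule landau_o.smallI)
  fix c :: real
  assume "c > 0"
  then obtain d where "d > 0" and d: "\<And>t. dist t x < d \<Longrightarrow> \<bar>f'' t - f'' x\<bar> < 2 * c"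
    using cont unfolding continuous_at_eps_delta
    by (metis dist_real_def mult_pos_pos zero_less_numeral)
  have "\<bar>f (x + e) - f x - f' x * e - f'' x / 2 * e^2\<bar> \<le> c * e^2"
    if e: "\<bar>e\<bar> < min d \<delta>" for e
  proof (cases "e = 0")
    case False
    let ?diff = "\<lambda>m::nat. if m = 0 then f else if m = 1 then f' else f''"
    have D: "\<forall>m t. m < 2 \<and> x - \<bar>e\<bar> \<le> t \<and> t \<le> x + \<bar>e\<bar>
        \<longrightarrow> DERIV (?diff m) t :> ?diff (Suc m) t"
    proof (intro allI impI)
      fix m :: nat and t assume "m < 2 \<and> x - \<bar>e\<bar> \<le> t \<and> t \<le> x + \<bar>e\<bar>"
      moreover from this have "t \<in> ball x \<delta>" using e by (auto simp: dist_real_def)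
      ultimately show "DERIV (?diff m) t :> ?diff (Suc m) t"
        using f' f'' by (cases m) auto
    qed
    have interval: "x - \<bar>e\<bar> \<le> x" "x \<le> x + \<bar>e\<bar>"
      "x - \<bar>e\<bar> \<le> x + e" "x + e \<le> x + \<bar>e\<bar>" "x + e \<noteq> x"
      using False by auto
    obtain t where t: "if x + e < x then x + e < t \<and> t < x else x < t \<and> t < x + e"
      and "f (x + e) = (\<Sum>m<2. ?diff m x / fact m * (x + e - x)^m)
                        + ?diff 2 t / fact 2 * (x + e - x)^2"
      using Taylor[of 2 ?diff f "x - \<bar>e\<bar>" "x + \<bar>e\<bar>" x "x + e", OF _ _ D interval] by auto
    then have taylor: "f (x + e) = f x + f' x * e + f'' t / 2 * e^2"
      by (simp add: numeral_2_eq_2)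
    from t have "\<bar>t - x\<bar> < \<bar>e\<bar>"
      by (auto split: if_splits)
    with e have "\<bar>f'' t - f'' x\<bar> < 2 * c"
      by (intro d) (simp add: dist_real_def)
    then have "\<bar>f'' t - f'' x\<bar> / 2 * e^2 \<le> c * e^2"
      by (intro mult_right_mono) auto
    moreover have "f (x + e) - f x - f' x * e - f'' x / 2 * e^2 = (f'' t - f'' x) / 2 * e^2"
      unfolding taylor by (simp add: algebra_simps diff_divide_distrib)
    ultimately show ?thesis
      by (metis abs_divide abs_mult abs_numeral abs_power2)
  qed simp
  moreover have "min d \<delta> > 0" using \<open>d > 0\<close> \<open>\<delta> > 0\<close> by simp
  ultimately show "\<forall>\<^sub>F e in nhds 0. norm (f (x + e) - f x - f' x * e - f'' x / 2 * e^2) \<le> c * norm (e^2)"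
    unfolding eventually_nhds_metric dist_real_def by (intro exI[of _ "min d \<delta>"]) auto
qed

lemma norm_add_unit_approx:
  fixes v u :: "'a::real_inner"
  assumes "norm v = 1"
  shows "\<bar>norm (v + u) - 1 - v \<bullet> u\<bar> \<le> 2 * (norm u)^2"
proof -
  define n where "n = norm (v + u)"
  define p where "p = v \<bullet> u"
  have n_1: "\<bar>n - 1\<bar> \<le> norm u"
    using norm_triangle_ineq3[of "v + u" v] assms by (simp add: n_def)
  have p: "\<bar>p\<bar> \<le> norm u"
    using Cauchy_Schwarz_ineq2[of v u] assms by (simp add: p_def)
  have "v \<bullet> v = 1"
    using assms by (simp add: norm_eq_1)
  then have "n^2 = 1 + 2 * p + (norm u)^2"
    by (simp add: n_def p_def power2_norm_eq_inner inner_add inner_commute)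
  then have key: "(n + 1) * (n - 1 - p) = p * (1 - n) + (norm u)^2"
    by (simp add: algebra_simps power2_eq_square)
  have "\<bar>p * (1 - n)\<bar> \<le> norm u * norm u"
    unfolding abs_mult using p n_1 by (intro mult_mono) auto
  then have "\<bar>(n + 1) * (n - 1 - p)\<bar> \<le> 2 * (norm u)^2"
    unfolding key power2_eq_square by linarith
  moreover have "\<bar>n - 1 - p\<bar> \<le> \<bar>(n + 1) * (n - 1 - p)\<bar>"
    using norm_ge_zero[of "v + u"] by (simp add: abs_mult mult_le_cancel_right1 n_def)
  ultimately show ?thesis by (simp add: n_def p_def)
qed

lemma unit_stretch_smallo:
  fixes v :: "'a::real_inner" and \<phi> :: "real \<Rightarrow> real"
  assumes v: "norm v = 1"
    and \<phi>: "(\<lambda>e. \<phi> (1 + e) - c * e^2) \<in> o[nhds 0](\<lambda>e. e^2)"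
  shows "(\<lambda>u. \<phi> (norm (v + u)) - c * (v \<bullet> u)^2) \<in> o[nhds 0](\<lambda>u. (norm u)^2)"
proof -
  define e where "e u = norm (v + u) - 1" for u
  define p where "p u = v \<bullet> u" for u
  have e_le: "\<bar>e u\<bar> \<le> norm u" for u
    using norm_triangle_ineq3[of "v + u" v] v by (simp add: e_def)
  have p_le: "\<bar>p u\<bar> \<le> norm u" for u
    using Cauchy_Schwarz_ineq2[of v u] v by (simp add: p_def)
  have norm_0: "((\<lambda>u. norm u) \<longlongrightarrow> 0) (nhds (0::'a))"
    using tendsto_norm_zero[OF filterlim_ident] .
  have "(e \<longlongrightarrow> 0) (nhds 0)"
    using e_le by (intro Lim_null_comparison[OF _ norm_0]) simp
  then have "(\<lambda>u. \<phi> (1 + e u) - c * (e u)^2) \<in> o[nhds 0](\<lambda>u. (e u)^2)"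
    by (rule landau_o.small.compose[OF \<phi>])
  moreover have "(e u)^2 \<le> (norm u)^2" for u
    using e_le[of u] by (metis abs_le_square_iff abs_norm_cancel)
  then have "(\<lambda>u. (e u)^2) \<in> O[nhds 0](\<lambda>u. (norm u)^2)"
    by (intro bigoI[of _ 1] always_eventually) auto
  ultimately have taylor: "(\<lambda>u. \<phi> (1 + e u) - c * (e u)^2) \<in> o[nhds 0](\<lambda>u. (norm u)^2)"
    by (rule landau_o.small_big_trans)
  \<comment> \<open>e^2 - p^2 = (e - p)(e + p) is of third order in u\<close>
  have cubic: "(\<lambda>u. c * ((e u)^2 - (p u)^2)) \<in> o[nhds 0](\<lambda>u. (norm u)^2)"
  proof (rule landau_o.smallI)
    fix \<epsilon> :: real
    assume "\<epsilon> > 0"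
    have bound: "\<bar>c * ((e u)^2 - (p u)^2)\<bar> \<le> (4 * \<bar>c\<bar> * norm u) * (norm u)^2" for u
    proof -
      have "\<bar>e u - p u\<bar> \<le> 2 * (norm u)^2"
        using norm_add_unit_approx[OF v] by (simp add: e_def p_def)
      moreover have "\<bar>e u + p u\<bar> \<le> 2 * norm u"
        using abs_triangle_ineq[of "e u" "p u"] e_le[of u] p_le[of u] by linarith
      ultimately have prod_le: "\<bar>e u - p u\<bar> * \<bar>e u + p u\<bar> \<le> 2 * (norm u)^2 * (2 * norm u)"
        by (intro mult_mono) auto
      have "(e u)^2 - (p u)^2 = (e u - p u) * (e u + p u)"
        by (simp add: power2_eq_square algebra_simps)
      then have "\<bar>c * ((e u)^2 - (p u)^2)\<bar> = \<bar>c\<bar> * (\<bar>e u - p u\<bar> * \<bar>e u + p u\<bar>)"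
        by (simp add: abs_mult)
      also have "\<dots> \<le> \<bar>c\<bar> * (2 * (norm u)^2 * (2 * norm u))"
        using prod_le by (intro mult_left_mono) auto
      finally show ?thesis
        by (simp add: algebra_simps)
    qed
    have "((\<lambda>u. 4 * \<bar>c\<bar> * norm u) \<longlongrightarrow> 0) (nhds (0::'a))"
      by (rule tendsto_mult_right_zero[OF norm_0])
    then have "\<forall>\<^sub>F u in nhds (0::'a). 4 * \<bar>c\<bar> * norm u < \<epsilon>"
      using \<open>\<epsilon> > 0\<close> by (rule order_tendstoD)
    then show "\<forall>\<^sub>F u in nhds 0. norm (c * ((e u)^2 - (p u)^2)) \<le> \<epsilon> * norm ((norm u)^2)"
    proof eventually_elim
      case (elim u)
      then have "(4 * \<bar>c\<bar> * norm u) * (norm u)^2 \<le> \<epsilon> * (norm u)^2"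
        by (intro mult_right_mono) auto
      then show ?case using bound[of u] by simp
    qed
  qed
  have "(\<lambda>u. (\<phi> (1 + e u) - c * (e u)^2) + c * ((e u)^2 - (p u)^2)) \<in> o[nhds 0](\<lambda>u. (norm u)^2)"
    by (rule sum_in_smallo(1)[OF taylor cubic])
  then show ?thesis
    by (simp add: e_def p_def algebra_simps)
qed

lemma bounded_linear_matrix_vector_mult_left: "bounded_linear (\<lambda>A::real^'n^'m. A *v v)"
  unfolding linear_conv_bounded_linear[symmetric]
  by (intro linearI) (simp_all add: matrix_vector_mult_add_rdistrib scaleR_matrix_vector_assoc)

lemma tendsto_matrix_vector_mult_left_0: "((\<lambda>A::real^'n^'m. A *v v) \<longlongrightarrow> 0) (at 0)"
proof -
  have "((\<lambda>A::real^'n^'m. A *v v) \<longlongrightarrow> 0 *v v) (at 0)"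
    by (intro bounded_linear.tendsto[OF bounded_linear_matrix_vector_mult_left] tendsto_ident_at)
  then show ?thesis by simp
qed

lemma matrix_stretch_smallo:
  fixes v :: "real^'n" and \<phi> :: "real \<Rightarrow> real"
  assumes v: "norm v = 1"
    and \<phi>: "(\<lambda>e. \<phi> (1 + e) - c * e^2) \<in> o[nhds 0](\<lambda>e. e^2)"
  shows "(\<lambda>G::real^'n^'n. \<phi> (norm ((mat 1 + G) *v v)) - c * (v \<bullet> (G *v v))^2)
           \<in> o[at 0](\<lambda>G. (norm G)^2)"
proof -
  have "(\<lambda>G::real^'n^'n. \<phi> (norm (v + G *v v)) - c * (v \<bullet> (G *v v))^2)
          \<in> o[at 0](\<lambda>G. (norm (G *v v))^2)"
    by (rule landau_o.small.compose[OF unit_stretch_smallo[OF v \<phi>] tendsto_matrix_vector_mult_left_0])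
  moreover obtain K where K: "\<And>G::real^'n^'n. norm (G *v v) \<le> norm G * K"
    using bounded_linear.bounded[OF bounded_linear_matrix_vector_mult_left] by blast
  have "(norm (G *v v))^2 \<le> K^2 * (norm G)^2" for G :: "real^'n^'n"
    using power_mono[OF K[of G], of 2] by (simp add: power_mult_distrib mult.commute)
  then have "(\<lambda>G::real^'n^'n. (norm (G *v v))^2) \<in> O[at 0](\<lambda>G. (norm G)^2)"
    by (intro bigoI[of _ "K^2"] always_eventually) auto
  ultimately show ?thesis
    by (simp add: matrix_vector_mult_add_rdistrib landau_o.small_big_trans)
qed

lemma rotation_matrix_2_entries:
  assumes "rotation_matrix (R::real^2^2)"
  shows "R$1$2 = - R$2$1" "R$2$2 = R$1$1" "(R$1$1)^2 + (R$2$1)^2 = 1"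
proof -
  have o: "transpose R ** R = mat 1" and "det R = 1"
    using assms by (auto simp: rotation_matrix_def orthogonal_matrix_def)
  then have d: "R$1$1 * R$2$2 - R$1$2 * R$2$1 = 1"
    by (simp add: det_2)
  have "(transpose R ** R) $ i $ j = mat 1 $ i $ j" for i j
    using o by simp
  from this[of 1 1] this[of 2 2]
  have e11: "(R$1$1)^2 + (R$2$1)^2 = 1"
    and e22: "(R$1$2)^2 + (R$2$2)^2 = 1"
    by (simp_all add: matrix_matrix_mult_def sum_2 transpose_def mat_def power2_eq_square)
  have "(R$1$1 - R$2$2)^2 + (R$1$2 + R$2$1)^2 = 0"
    using e11 e22 d by (simp add: power2_eq_square algebra_simps)
  then show "R$1$2 = - R$2$1" "R$2$2 = R$1$1"
    by (simp_all add: sum_power2_eq_zero_iff)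
  show "(R$1$1)^2 + (R$2$1)^2 = 1" by (fact e11)
qed

lemma lattice_vectors_coords:
  assumes "rotation_matrix R"
  defines "a \<equiv> R$1$1" and "c \<equiv> R$2$1" and "q \<equiv> sqrt 3"
  shows "lat_v1 R = vector [a, c]"
    and "lat_v2 R = (1/2) *\<^sub>R vector [a - c * q, c + a * q]"
    and "lat_v2 R - lat_v1 R = (1/2) *\<^sub>R vector [- a - c * q, - c + a * q]"
  using rotation_matrix_2_entries[OF assms(1)]
  by (simp_all add: lat_v1_def lat_v2_def a_def c_def q_def vec_eq_iff forall_2
      matrix_vector_mult_def sum_2 field_simps)

lemma norm_vector_2: "norm (vector [x, y] :: real^2) = sqrt (x^2 + y^2)"
  by (simp add: norm_eq_sqrt_inner inner_vec_def sum_2 power2_eq_square)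

lemma quadratic_form_vector_2:
  "vector [x, y] \<bullet> (G *v vector [x, y]) = x * (G$1$1 * x + G$1$2 * y) + y * (G$2$1 * x + G$2$2 * y)"
  for G :: "real^2^2"
  by (simp add: inner_vec_def matrix_vector_mult_def sum_2)

lemma lattice_vectors_unit:
  assumes "rotation_matrix R"
  shows "norm (lat_v1 R) = 1" "norm (lat_v2 R) = 1" "norm (lat_v2 R - lat_v1 R) = 1"
proof -
  define a where "a = R$1$1"
  define c where "c = R$2$1"
  define q :: real where "q = sqrt 3"
  have ac: "a^2 + c^2 = 1" and q: "q^2 = 3"
    using rotation_matrix_2_entries(3)[OF assms] by (simp_all add: a_def c_def q_def)
  have "(a - c * q)^2 + (c + a * q)^2 = 2^2" "(- a - c * q)^2 + (- c + a * q)^2 = 2^2"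
    using ac q by algebra+
  then show "norm (lat_v1 R) = 1" "norm (lat_v2 R) = 1" "norm (lat_v2 R - lat_v1 R) = 1"
    using ac lattice_vectors_coords[OF assms, folded a_def c_def q_def]
    by (simp_all add: norm_vector_2)
qed

text \<open>With a = cos \<theta>, c = sin \<theta> and q = \<surd>3, the arguments of p are the directions at angles
  \<theta>, \<theta> + 60 and \<theta> + 120 degrees (the last two scaled by 2), and p is the quadratic form of G.\<close>
lemma triangle_directions_sum_squares:
  fixes a c q g11 g12 g21 g22 :: real
  assumes "a^2 + c^2 = 1" and "q^2 = 3"
  defines "p \<equiv> \<lambda>x y. x * (g11 * x + g12 * y) + y * (g21 * x + g22 * y)"
  shows "16 * (p a c)^2 + (p (a - c * q) (c + a * q))^2 + (p (- a - c * q) (- c + a * q))^2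
           = 6 * (3 * g11^2 + 3 * g22^2 + 2 * g11 * g22 + (g12 + g21)^2)"
  using assms unfolding p_def by algebra

lemma quadratic_form_scaleR:
  "(k *\<^sub>R x) \<bullet> (G *v (k *\<^sub>R x)) = k^2 * (x \<bullet> (G *v x))" for G :: "real^'n^'n"
  by (simp add: matrix_vector_mult_scaleR power2_eq_square)

lemma Qform_lattice_directions:
  assumes "rotation_matrix R"
  shows "Qform \<alpha> G = \<alpha> / 2 * ((lat_v1 R \<bullet> (G *v lat_v1 R))^2 + (lat_v2 R \<bullet> (G *v lat_v2 R))^2
           + ((lat_v2 R - lat_v1 R) \<bullet> (G *v (lat_v2 R - lat_v1 R)))^2)"
proof -
  define a where "a = R$1$1"
  define c where "c = R$2$1"
  define q :: real where "q = sqrt 3"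
  define p where "p x y = x * (G$1$1 * x + G$1$2 * y) + y * (G$2$1 * x + G$2$2 * y)" for x y
  have "a^2 + c^2 = 1" "q^2 = 3"
    using rotation_matrix_2_entries(3)[OF assms] by (simp_all add: a_def c_def q_def)
  note identity =
    triangle_directions_sum_squares[OF this, of "G$1$1" "G$1$2" "G$2$1" "G$2$2", folded p_def]
  note coords = lattice_vectors_coords[OF assms, folded a_def c_def q_def]
  have dir1: "lat_v1 R \<bullet> (G *v lat_v1 R) = p a c"
    and dir2: "lat_v2 R \<bullet> (G *v lat_v2 R) = p (a - c * q) (c + a * q) / 4"
    unfolding coords(1,2) quadratic_form_scaleR
    by (simp_all add: quadratic_form_vector_2 p_def power2_eq_square)
  have dir3: "(lat_v2 R - lat_v1 R) \<bullet> (G *v (lat_v2 R - lat_v1 R))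
      = p (- a - c * q) (- c + a * q) / 4"
    unfolding coords(3) quadratic_form_scaleR
    by (simp add: quadratic_form_vector_2 p_def power2_eq_square)
  have scale: "\<alpha> / 2 * (A^2 + (B / 4)^2 + (C / 4)^2) = \<alpha> / 32 * (16 * A^2 + B^2 + C^2)"
    for A B C :: real
    by (simp add: power_divide field_simps)
  show ?thesis
    unfolding dir1 dir2 dir3 scale identity by (simp add: Qform_def power_divide)
qed

lemma W_tri_expansion:
  fixes W :: "real \<Rightarrow> ereal" and w :: "real \<Rightarrow> real"
  assumes rot: "rotation_matrix R" and "\<delta> > 0"
    and W_loc: "\<forall>r\<in>ball 1 \<delta>. W r = ereal (w r)"
    and w: "(\<lambda>e. w (1 + e) - \<alpha> / 2 * e^2) \<in> o[nhds 0](\<lambda>e. e^2)"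
  shows "(\<lambda>G. real_of_ereal (W_tri W R (mat 1 + G)) - Qform \<alpha> G / 2) \<in> o[at 0](\<lambda>G. (norm G)^2)"
proof -
  define d where "d v G = w (norm ((mat 1 + G) *v v)) - \<alpha> / 2 * (v \<bullet> (G *v v))^2"
    for v :: "real^2" and G :: "real^2^2"
  have small: "d v \<in> o[at 0](\<lambda>G. (norm G)^2)" if "norm v = 1" for v
    unfolding d_def using matrix_stretch_smallo[OF that w] .
  have local:
    "\<forall>\<^sub>F G in at 0. W (norm ((mat 1 + G) *v v)) = ereal (w (norm ((mat 1 + G) *v v)))"
    if "norm v = 1" for v :: "real^2"
  proof -
    have "((\<lambda>G::real^2^2. norm (v + G *v v)) \<longlongrightarrow> norm (v + 0)) (at 0)"
      by (intro tendsto_intros tendsto_matrix_vector_mult_left_0)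
    then have "\<forall>\<^sub>F G in at 0. norm ((mat 1 + G) *v v) \<in> ball 1 \<delta>"
      using that \<open>\<delta> > 0\<close> by (intro topological_tendstoD) (auto simp: matrix_vector_mult_add_rdistrib)
    then show ?thesis
      by eventually_elim (use W_loc in blast)
  qed
  define v1 v2 v3 where "v1 = lat_v1 R" and "v2 = lat_v2 R" and "v3 = lat_v2 R - lat_v1 R"
  have unit: "norm v1 = 1" "norm v2 = 1" "norm v3 = 1"
    using lattice_vectors_unit[OF rot] by (simp_all add: v1_def v2_def v3_def)
  have split: "\<forall>\<^sub>F G in at 0. (d v1 G + d v2 G + d v3 G) / 2
          = real_of_ereal (W_tri W R (mat 1 + G)) - Qform \<alpha> G / 2"
    using local[OF unit(1)] local[OF unit(2)] local[OF unit(3)]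
  proof eventually_elim
    case (elim G)
    have "W_tri W R (mat 1 + G) = ereal (1/2) *
        (W (norm ((mat 1 + G) *v v1)) + W (norm ((mat 1 + G) *v v2)) + W (norm ((mat 1 + G) *v v3)))"
      by (simp only: W_tri_def v1_def v2_def v3_def)
    then show ?case
      using elim Qform_lattice_directions[OF rot, of \<alpha> G, folded v1_def v2_def v3_def]
      by (simp add: d_def field_simps)
  qed
  have "(\<lambda>G. (d v1 G + d v2 G + d v3 G) / 2) \<in> o[at 0](\<lambda>G. (norm G)^2)"
    using small[OF unit(1)] small[OF unit(2)] small[OF unit(3)]
    by (simp add: sum_in_smallo(1))
  then show ?thesis
    using landau_o.small.in_cong[OF split] by simp
qed

lemma Qform_symmetric_part: "Qform \<alpha> G = Qform \<alpha> ((1/2) *\<^sub>R (transpose G + G))"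
  by (simp add: Qform_def transpose_def add.commute)

lemma Qform_sum_of_squares:
  "Qform \<alpha> G = 3 * \<alpha> / 16 *
     (2 * (G$1$1)^2 + 2 * (G$2$2)^2 + (G$1$1 + G$2$2)^2 + (G$1$2 + G$2$1)^2)"
  by (simp add: Qform_def power_divide power2_eq_square algebra_simps)

lemma Qform_nonneg: "\<alpha> \<ge> 0 \<Longrightarrow> Qform \<alpha> G \<ge> 0"
  unfolding Qform_sum_of_squares by simp

lemma Qform_pos_symmetric:
  assumes "\<alpha> > 0" "transpose G = G" "G \<noteq> 0"
  shows "Qform \<alpha> G > 0"
proof -
  have "G$2$1 = G$1$2"
    using arg_cong[OF assms(2), of "\<lambda>M. M$1$2"] by (simp add: transpose_def)
  moreover have "G$1$1 \<noteq> 0 \<or> G$2$2 \<noteq> 0 \<or> G$1$2 \<noteq> 0"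
    using assms(3) calculation by (auto simp: vec_eq_iff forall_2)
  ultimately show ?thesis
    using assms(1) unfolding Qform_sum_of_squares
    by (auto intro!: mult_pos_pos simp: add_pos_nonneg add_nonneg_pos)
qed

lemma Qform_convex_combination:
  assumes "u + v = 1"
  shows "Qform \<alpha> (u *\<^sub>R x + v *\<^sub>R y) = u * Qform \<alpha> x + v * Qform \<alpha> y - u * v * Qform \<alpha> (x - y)"
proof -
  define P where "P G = 2 * (G$1$1)^2 + 2 * (G$2$2)^2 + (G$1$1 + G$2$2)^2 + (G$1$2 + G$2$1)^2"
    for G :: "real^2^2"
  have P_comb: "P (u *\<^sub>R x + v *\<^sub>R y) = u * P x + v * P y - u * v * P (x - y)"
    using assms unfolding P_def by simp algebra
  show ?thesis
    unfolding Qform_sum_of_squares P_def[symmetric] P_comb by (simp add: algebra_simps)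
qed

lemma Qform_convex: "\<alpha> \<ge> 0 \<Longrightarrow> convex_on UNIV (Qform \<alpha>)"
  unfolding convex_on_def
  by (auto simp: Qform_convex_combination intro!: mult_nonneg_nonneg Qform_nonneg)

lemma Qform_strictly_convex_symmetric:
  assumes "\<alpha> > 0"
  shows "strictly_convex_on {G. transpose G = G} (Qform \<alpha>)"
  unfolding strictly_convex_on_def
proof (intro ballI allI impI)
  fix x y :: "real^2^2" and t :: real
  assume "x \<in> {G. transpose G = G}" "y \<in> {G. transpose G = G}" "x \<noteq> y" "0 < t \<and> t < 1"
  then have "0 < (1 - t) * t * Qform \<alpha> (x - y)"
    using assms by (intro mult_pos_pos Qform_pos_symmetric) (auto simp: transpose_def vec_eq_iff)
  then show "Qform \<alpha> ((1 - t) *\<^sub>R x + t *\<^sub>R y) < (1 - t) * Qform \<alpha> x + t * Qform \<alpha> y"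
    using Qform_convex_combination[of "1 - t" t \<alpha> x y] by simp
qed

lemma profile_minimum_at_1:
  fixes W :: "real \<Rightarrow> ereal" and w w' :: "real \<Rightarrow> real"
  assumes "\<delta> > 0"
    and W_nonneg: "\<forall>r\<ge>0. W r \<ge> 0"
    and W_zero: "\<forall>r\<ge>0. W r = 0 \<longleftrightarrow> r = 1"
    and W_loc: "\<forall>r\<in>ball 1 \<delta>. W r = ereal (w r)"
    and w': "\<forall>r\<in>ball 1 \<delta>. (w has_real_derivative w' r) (at r)"
  shows "w 1 = 0" "w' 1 = 0"
proof -
  have one: "1 \<in> ball (1::real) \<delta>"
    using \<open>\<delta> > 0\<close> by simp
  then have "W 1 = ereal (w 1)"
    using W_loc by blast
  moreover have "W 1 = 0"
    using W_zero by simp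
  ultimately show w_1: "w 1 = 0"
    by (simp add: zero_ereal_def)
  show "w' 1 = 0"
  proof (rule DERIV_local_min)
    show "(w has_real_derivative w' 1) (at 1)"
      using w' one by blast
    show "0 < min \<delta> 1"
      using \<open>\<delta> > 0\<close> by simp
    show "\<forall>y. \<bar>1 - y\<bar> < min \<delta> 1 \<longrightarrow> w 1 \<le> w y"
    proof (intro allI impI)
      fix y :: real
      assume "\<bar>1 - y\<bar> < min \<delta> 1"
      then have "y \<in> ball 1 \<delta>" "y \<ge> 0"
        by (auto simp: dist_real_def)
      then show "w 1 \<le> w y"
        using W_loc W_nonneg w_1 by fastforce
    qed
  qed
qed

theorem lemma3p2:
  fixes W :: "real \<Rightarrow> ereal" and w w' w'' :: "real \<Rightarrow> real"
    and \<delta> \<alpha> :: real and \<beta> :: ereal and R :: "real^2^2"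
  assumes rot: "rotation_matrix R"
    and W_nonneg: "\<forall>r\<ge>0. W r \<ge> 0"
    and W_zero: "\<forall>r\<ge>0. W r = 0 \<longleftrightarrow> r = 1"
    and W_cont: "continuous_on {0..} W"
    and W_lim: "(W \<longlongrightarrow> \<beta>) at_top"
    and \<delta>_pos: "\<delta> > 0"
    and W_loc: "\<forall>r\<in>ball 1 \<delta>. W r = ereal (w r)"
    and w_d1: "\<forall>r\<in>ball 1 \<delta>. (w has_real_derivative w' r) (at r)"
    and w_d2: "\<forall>r\<in>ball 1 \<delta>. (w' has_real_derivative w'' r) (at r)"
    and w_C2: "continuous_on (ball 1 \<delta>) w''"
    and \<alpha>_def: "\<alpha> = w'' 1"
    and \<alpha>_pos: "\<alpha> > 0"
  shows "((\<lambda>G. real_of_ereal (W_tri W R (mat 1 + G)) - Qform \<alpha> G / 2)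
            \<in> o[at 0](\<lambda>G. (norm G)^2))
    \<and> (\<forall>G. Qform \<alpha> G = Qform \<alpha> ((1/2) *\<^sub>R (transpose G + G)))
    \<and> (\<forall>G. Qform \<alpha> G \<ge> 0)
    \<and> convex_on UNIV (Qform \<alpha>)
    \<and> (\<forall>G. transpose G = G \<and> G \<noteq> 0 \<longrightarrow> Qform \<alpha> G > 0)
    \<and> strictly_convex_on {G. transpose G = G} (Qform \<alpha>)"
proof -
  have "isCont w'' 1"
    using w_C2 \<delta>_pos by (simp add: continuous_on_eq_continuous_at)
  then have "(\<lambda>e. w (1 + e) - \<alpha> / 2 * e^2) \<in> o[nhds 0](\<lambda>e. e^2)"
    using taylor_second_order_smallo[OF \<delta>_pos w_d1 w_d2]
      profile_minimum_at_1[OF \<delta>_pos W_nonneg W_zero W_loc w_d1] \<alpha>_def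
    by simp
  then show ?thesis
    using W_tri_expansion[OF rot \<delta>_pos W_loc] Qform_symmetric_part Qform_nonneg Qform_convex
      Qform_pos_symmetric Qform_strictly_convex_symmetric \<alpha>_pos
    by (simp add: less_imp_le)
qed

end
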